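(* Suppose $\mathcal L\subsetneq\mathcal K\subseteq\{1,\dots,n\}$ and $Q$ is a prime ideal of $R$ containing $L_{\mathcal L}+I(A_{\mathcal K})$. Then there is some $\mathcal K'$ with $\mathcal L\subseteq\mathcal K'\subseteq\mathcal K$ and $|\mathcal K'|+1=|\mathcal K|$ such that $L_{\mathcal K'}\subseteq Q$.
   Context: $\mathbb K$ is a field, $R=\mathbb K[x_{i_1,\dots,i_n}:1\le i_j\le a_j]$, $A=(x_{i_1,\dots,i_n})$ the generic table. For a tuple $\sigma$ with $\sigma_j\in\{1,\dots,a_j\}\cup\{+\}$, $x_\sigma$ is the sum of all $x_{i_1,\dots,i_n}$ with $i_j=\sigma_j$ whenever $\sigma_j\ne+$. For $\mathscr J=\{j_1<\dots<j_m\}\subseteq\{1,\dots,n\}$ the margin $A_{\mathscr J}$ is the table whose $(i_1,\dots,i_m)$ entry is $x_\sigma$ with $\sigma_{j_r}=i_r$, $\sigma_j=+$ for $j\notin\mathscr J$; $L_{\mathscr J}$ is the ideal generated by the entries of $A_{\mathscr J}$. For a table $B$ with entries in $R$, $I(B)$ is the ideal generated by its generalized $2\times2$ minors $\det\begin{pmatrix} b_{i_1,\dots,i_m} & b_{j_1,\dots,j_{l-1},i_l,j_{l+1},\dots,j_m}\\ b_{i_1,\dots,i_{l-1},j_l,i_{l+1},\dots,i_m} & b_{j_1,\dots,j_m}\end{pmatrix}$. *)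

theory Defs
  imports Main "HOL-Library.Poly_Mapping"
begin

text \<open>Multi-indices (i_1,...,i_n) are encoded as functions f :: nat => nat with
  f j in {1..a j} for j in {1..n} and f j = 0 for j outside {1..n}.\<close>

type_synonym 'k mpoly = "((nat \<Rightarrow> nat) \<Rightarrow>\<^sub>0 nat) \<Rightarrow>\<^sub>0 'k"

definition idx :: "nat \<Rightarrow> (nat \<Rightarrow> nat) \<Rightarrow> (nat \<Rightarrow> nat) set" where
  "idx n a = {f. (\<forall>j\<in>{1..n}. 1 \<le> f j \<and> f j \<le> a j) \<and> (\<forall>j. j \<notin> {1..n} \<longrightarrow> f j = 0)}"

definition Var :: "(nat \<Rightarrow> nat) \<Rightarrow> 'k::comm_ring_1 mpoly" where
  "Var f = Poly_Mapping.single (Poly_Mapping.single f 1) 1"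

text \<open>The polynomial ring R = K[x_f : f in idx n a], as a subset of the polynomial
  ring in all variables indexed by nat => nat.\<close>
definition Rring :: "nat \<Rightarrow> (nat \<Rightarrow> nat) \<Rightarrow> 'k::comm_ring_1 mpoly set" where
  "Rring n a = {p. \<forall>m\<in>Poly_Mapping.keys p. Poly_Mapping.keys m \<subseteq> idx n a}"

definition ideal_gen :: "'k::comm_ring_1 mpoly set \<Rightarrow> 'k mpoly set \<Rightarrow> 'k mpoly set" where
  "ideal_gen R S = {p. \<exists>F c. finite F \<and> F \<subseteq> S \<and> (\<forall>s\<in>F. c s \<in> R) \<and> p = (\<Sum>s\<in>F. c s * s)}"

definition is_ideal :: "'k::comm_ring_1 mpoly set \<Rightarrow> 'k mpoly set \<Rightarrow> bool" where
  "is_ideal R I \<longleftrightarrow> I \<subseteq> R \<and> 0 \<in> I \<and> (\<forall>x\<in>I. \<forall>y\<in>I. x + y \<in> I)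
     \<and> (\<forall>r\<in>R. \<forall>x\<in>I. r * x \<in> I)"

definition is_prime_ideal :: "'k::comm_ring_1 mpoly set \<Rightarrow> 'k mpoly set \<Rightarrow> bool" where
  "is_prime_ideal R Q \<longleftrightarrow> is_ideal R Q \<and> Q \<noteq> R
     \<and> (\<forall>x\<in>R. \<forall>y\<in>R. x * y \<in> Q \<longrightarrow> x \<in> Q \<or> y \<in> Q)"

text \<open>Entry of the margin A_J at the position given by the restriction of f to J:
  the sum of all x_g with g j = f j for all j in J.\<close>
definition marg :: "nat \<Rightarrow> (nat \<Rightarrow> nat) \<Rightarrow> nat set \<Rightarrow> (nat \<Rightarrow> nat) \<Rightarrow> 'k::comm_ring_1 mpoly" where
  "marg n a J f = (\<Sum>g\<in>{g\<in>idx n a. \<forall>j\<in>J. g j = f j}. Var g)"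

definition Lmarg :: "nat \<Rightarrow> (nat \<Rightarrow> nat) \<Rightarrow> nat set \<Rightarrow> 'k::comm_ring_1 mpoly set" where
  "Lmarg n a J = ideal_gen (Rring n a) {marg n a J f | f. f \<in> idx n a}"

definition Imarg :: "nat \<Rightarrow> (nat \<Rightarrow> nat) \<Rightarrow> nat set \<Rightarrow> 'k::comm_ring_1 mpoly set" where
  "Imarg n a J = ideal_gen (Rring n a)
     {marg n a J f * marg n a J g - marg n a J (g(l := f l)) * marg n a J (f(l := g l))
       | f g l. f \<in> idx n a \<and> g \<in> idx n a \<and> l \<in> J}"

end

theory Submission
  imports Defs
begin

text \<open>For S, T \<subseteq> K, expanding entries of A_S and A_T into entries of A_K and exchanging the
  coordinates in T - S shows that an entry of A_S times an entry of A_T is congruent modulo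
  I(A_K) to an entry of A_{S \<union> T} times an entry of A_{S \<inter> T}. Pick j \<in> K - L. If some
  entry of A_{L \<union> {j}} lies outside Q, take S = K - {j} and T = L \<union> {j}: then S \<inter> T = L, so
  the right-hand product lies in Q and primality puts every entry of A_{K - {j}} into Q.
  Otherwise L_{L \<union> {j}} \<subseteq> Q, and we continue with the larger set L \<union> {j}.\<close>

lemma finite_idx: "finite (idx n a)"
proof (rule finite_subset)
  show "idx n a \<subseteq> {f. \<forall>x. (x \<in> {1..n} \<longrightarrow> f x \<in> (\<Union>j\<in>{1..n}. {1..a j}))
                           \<and> (x \<notin> {1..n} \<longrightarrow> f x = 0)}"
    unfolding idx_def by fastforce
  show "finite \<dots>"
    by (rule finite_set_of_finite_funs) auto
qed

lemma override_on_idx: "f \<in> idx n a \<Longrightarrow> g \<in> idx n a \<Longrightarrow> override_on f g D \<in> idx n a"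
  unfolding idx_def override_on_def by auto

lemma sum_in_Rring: "(\<And>i. i \<in> A \<Longrightarrow> f i \<in> Rring n a) \<Longrightarrow> sum f A \<in> Rring n a"
proof (induction A rule: infinite_finite_induct)
  case (insert x F)
  then show ?case
    using keys_add[of "f x" "sum f F"] by (auto simp: Rring_def)
qed (simp_all add: Rring_def)

lemma marg_in_Rring: "marg n a J f \<in> Rring n a"
  unfolding marg_def by (rule sum_in_Rring) (simp add: Rring_def Var_def)

lemma ideal_sum_mem:
  assumes "is_ideal R Q" and "\<And>i. i \<in> A \<Longrightarrow> f i \<in> Q"
  shows "sum f A \<in> Q"
  using assms(2) by (induction A rule: infinite_finite_induct) (use assms(1) in \<open>auto simp: is_ideal_def\<close>)

lemma ideal_gen_Rring_subset_iff:
  assumes "is_ideal (Rring n a) Q"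
  shows "ideal_gen (Rring n a) S \<subseteq> Q \<longleftrightarrow> S \<subseteq> Q"
proof
  assume "S \<subseteq> Q"
  with assms show "ideal_gen (Rring n a) S \<subseteq> Q"
    unfolding ideal_gen_def by (auto intro!: ideal_sum_mem[OF assms] simp: is_ideal_def)
next
  have "s \<in> ideal_gen (Rring n a) S" if "s \<in> S" for s
    unfolding ideal_gen_def using that
    by (intro CollectI exI[of _ "{s}"] exI[of _ "\<lambda>_. 1"]) (simp add: Rring_def)
  then show "ideal_gen (Rring n a) S \<subseteq> Q \<Longrightarrow> S \<subseteq> Q" by blast
qed

lemma Lmarg_subset_iff:
  "is_ideal (Rring n a) Q \<Longrightarrow> Lmarg n a J \<subseteq> Q \<longleftrightarrow> (\<forall>f\<in>idx n a. marg n a J f \<in> Q)"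
  unfolding Lmarg_def by (auto simp: ideal_gen_Rring_subset_iff)

lemma Imarg_subsetD:
  assumes "is_ideal (Rring n a) Q" and "Imarg n a K \<subseteq> Q"
    and "f \<in> idx n a" and "g \<in> idx n a" and "l \<in> K"
  shows "marg n a K f * marg n a K g - marg n a K (g(l := f l)) * marg n a K (f(l := g l)) \<in> Q"
  using assms unfolding Imarg_def ideal_gen_Rring_subset_iff[OF assms(1)] by blast

lemma marg_override_minor_mem:
  assumes Q: "is_ideal (Rring n a) Q" and IQ: "Imarg n a K \<subseteq> Q"
    and D: "finite D" "D \<subseteq> K" and f: "f \<in> idx n a" and g: "g \<in> idx n a"
  shows "marg n a K f * marg n a K g
           - marg n a K (override_on f g D) * marg n a K (override_on g f D) \<in> Q"
  using D
proof (induction D rule: finite_induct)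
  case empty
  then show ?case using Q by (simp add: is_ideal_def)
next
  case (insert l D)
  let ?m = "marg n a K"
  define F where "F = override_on f g D"
  define G where "G = override_on g f D"
  have F_ins: "override_on f g (insert l D) = F(l := G l)"
    and G_ins: "override_on g f (insert l D) = G(l := F l)"
    using insert.hyps(2) by (simp_all add: F_def G_def override_on_insert)
  have "?m F * ?m G - ?m (G(l := F l)) * ?m (F(l := G l)) \<in> Q"
    using Imarg_subsetD[OF Q IQ] insert.prems f g by (simp add: F_def G_def override_on_idx)
  moreover have "?m f * ?m g - ?m F * ?m G \<in> Q"
    using insert by (simp add: F_def G_def)
  ultimately have "(?m f * ?m g - ?m F * ?m G)
      + (?m F * ?m G - ?m (G(l := F l)) * ?m (F(l := G l))) \<in> Q"
    using Q unfolding is_ideal_def by blast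
  also have "(?m f * ?m g - ?m F * ?m G) + (?m F * ?m G - ?m (G(l := F l)) * ?m (F(l := G l)))
      = ?m f * ?m g - ?m (F(l := G l)) * ?m (G(l := F l))"
    by (simp add: mult.commute)
  finally show ?case
    by (simp only: F_ins G_ins)
qed

text \<open>Indices of the entries of A_K that sum to the entry of A_S at f. As marg n a K ignores the
  coordinates outside K, these are normalised to those of a base point c.\<close>
definition finer_cells ::
    "nat \<Rightarrow> (nat \<Rightarrow> nat) \<Rightarrow> nat set \<Rightarrow> (nat \<Rightarrow> nat) \<Rightarrow> nat set \<Rightarrow> (nat \<Rightarrow> nat)
      \<Rightarrow> (nat \<Rightarrow> nat) set" where
  "finer_cells n a K c S f = {f' \<in> idx n a. (\<forall>j\<in>S. f' j = f j) \<and> (\<forall>j\<in>{1..n} - K. f' j = c j)}"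

lemma marg_eq_sum_finer_cells:
  assumes SK: "S \<subseteq> K" and c: "c \<in> idx n a"
  shows "marg n a S f = (\<Sum>f'\<in>finer_cells n a K c S f. marg n a K f')"
proof -
  define A where "A = {g \<in> idx n a. \<forall>j\<in>S. g j = f j}"
  define r where "r g = override_on c g K" for g :: "nat \<Rightarrow> nat"
  have cells: "finer_cells n a K c S f = r ` A"
  proof (intro equalityI subsetI)
    fix y assume y: "y \<in> finer_cells n a K c S f"
    have "y i = r y i" for i
      using y c by (cases "i \<in> {1..n}") (auto simp: r_def override_on_def finer_cells_def idx_def)
    then have "y = r y" ..
    with y SK show "y \<in> r ` A" unfolding A_def finer_cells_def by blast
  qed (use SK c in \<open>auto simp: A_def r_def finer_cells_def override_on_idx\<close>)
  have r_eq_iff: "r g = r g' \<longleftrightarrow> (\<forall>j\<in>K. g j = g' j)" for g g'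
    unfolding r_def override_on_def fun_eq_iff by metis
  have fibre: "{g \<in> A. r g = r g'} = {g \<in> idx n a. \<forall>j\<in>K. g j = r g' j}" if "g' \<in> A" for g'
    using that SK unfolding r_eq_iff by (auto simp: A_def r_def)
  have "marg n a S f = (\<Sum>g\<in>A. Var g)"
    unfolding marg_def A_def ..
  also have "\<dots> = (\<Sum>y\<in>r ` A. \<Sum>g\<in>{g \<in> A. r g = y}. Var g)"
    by (rule sum.image_gen) (simp add: A_def finite_idx)
  also have "\<dots> = (\<Sum>y\<in>r ` A. marg n a K y)"
    by (rule sum.cong) (auto simp: fibre marg_def)
  finally show ?thesis by (simp add: cells)
qed

lemma bij_betw_override_on_finer_cells:
  fixes S T K :: "nat set"
  assumes TK: "T \<subseteq> K"
  defines "D \<equiv> T - S"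
  shows "bij_betw (\<lambda>(x, y). (override_on x y D, override_on y x D))
           (finer_cells n a K c S f \<times> finer_cells n a K c T g)
           (finer_cells n a K c (S \<union> T) (override_on f g D) \<times> finer_cells n a K c (S \<inter> T) g)"
    (is "bij_betw ?\<sigma> ?P ?P'")
proof (rule bij_betw_byWitness[where f' = ?\<sigma>])
  show "\<forall>p\<in>?P. ?\<sigma> (?\<sigma> p) = p" "\<forall>p\<in>?P'. ?\<sigma> (?\<sigma> p) = p"
    by (auto simp: override_on_def fun_eq_iff)
  have D: "D \<subseteq> K"
    using TK by (auto simp: D_def)
  have "?\<sigma> (x, y) \<in> ?P'" if "(x, y) \<in> ?P" for x y
  proof -
    from that have x: "x \<in> idx n a" "\<forall>j\<in>S. x j = f j" "\<forall>j\<in>{1..n} - K. x j = c j"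
      and y: "y \<in> idx n a" "\<forall>j\<in>T. y j = g j" "\<forall>j\<in>{1..n} - K. y j = c j"
      by (simp_all add: finer_cells_def)
    have "\<forall>j\<in>S \<union> T. override_on x y D j = override_on f g D j"
      using x(2) y(2) by (auto simp: override_on_def D_def)
    moreover have "\<forall>j\<in>S \<inter> T. override_on y x D j = g j"
      using y(2) by (auto simp: override_on_def D_def)
    moreover have "\<forall>j\<in>{1..n} - K. override_on x y D j = c j \<and> override_on y x D j = c j"
      using x(3) y(3) D by (auto simp: override_on_def)
    ultimately show ?thesis
      using x(1) y(1) by (simp add: finer_cells_def override_on_idx)
  qed
  then show "?\<sigma> ` ?P \<subseteq> ?P'"
    by auto
  have "?\<sigma> (x, y) \<in> ?P" if "(x, y) \<in> ?P'" for x y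
  proof -
    from that have x: "x \<in> idx n a" "\<forall>j\<in>S \<union> T. x j = override_on f g D j"
        "\<forall>j\<in>{1..n} - K. x j = c j"
      and y: "y \<in> idx n a" "\<forall>j\<in>S \<inter> T. y j = g j" "\<forall>j\<in>{1..n} - K. y j = c j"
      by (simp_all add: finer_cells_def)
    have "\<forall>j\<in>S. override_on x y D j = f j"
      using x(2) by (auto simp: override_on_def D_def)
    moreover have "\<forall>j\<in>T. override_on y x D j = g j"
      using x(2) y(2) by (auto simp: override_on_def D_def)
    moreover have "\<forall>j\<in>{1..n} - K. override_on x y D j = c j \<and> override_on y x D j = c j"
      using x(3) y(3) D by (auto simp: override_on_def)
    ultimately show ?thesis
      using x(1) y(1) by (simp add: finer_cells_def override_on_idx)
  qed
  then show "?\<sigma> ` ?P' \<subseteq> ?P"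
    by auto
qed

lemma marg_lattice_relation_mem:
  fixes Q :: "'k::comm_ring_1 mpoly set"
  assumes Q: "is_ideal (Rring n a) Q" and IQ: "Imarg n a K \<subseteq> Q" and K: "finite K"
    and SK: "S \<subseteq> K" and TK: "T \<subseteq> K" and f: "f \<in> idx n a"
  shows "marg n a S f * marg n a T g
           - marg n a (S \<union> T) (override_on f g (T - S)) * marg n a (S \<inter> T) g \<in> Q"
proof -
  define D where "D = T - S"
  define m :: "(nat \<Rightarrow> nat) \<Rightarrow> 'k mpoly" where "m = marg n a K"
  define cells where "cells = finer_cells n a K f"
  define P where "P = cells S f \<times> cells T g"
  have D: "finite D" "D \<subseteq> K"
    using K TK by (auto simp: D_def intro: finite_subset)
  have bij: "bij_betw (\<lambda>(x, y). (override_on x y D, override_on y x D)) P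
      (cells (S \<union> T) (override_on f g D) \<times> cells (S \<inter> T) g)"
    unfolding P_def cells_def D_def by (rule bij_betw_override_on_finer_cells[OF TK])
  have expand: "marg n a U u * marg n a V v = (\<Sum>(x, y)\<in>cells U u \<times> cells V v. m x * m y)"
    if "U \<subseteq> K" "V \<subseteq> K" for U V u v
    using that by (simp add: marg_eq_sum_finer_cells[OF _ f] cells_def m_def
                    sum_product sum.cartesian_product)
  have "marg n a S f * marg n a T g - marg n a (S \<union> T) (override_on f g D) * marg n a (S \<inter> T) g
      = (\<Sum>(x, y)\<in>P. m x * m y - m (override_on x y D) * m (override_on y x D))"
    using SK TK
    by (simp add: expand le_infI1 P_def sum.reindex_bij_betw[OF bij, symmetric] sum_subtractf
                  case_prod_beta)
  also have "\<dots> \<in> Q"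
  proof (rule ideal_sum_mem[OF Q], clarify)
    fix x y assume "(x, y) \<in> P"
    then have "x \<in> idx n a" "y \<in> idx n a"
      by (auto simp: P_def cells_def finer_cells_def)
    with marg_override_minor_mem[OF Q IQ D]
    show "m x * m y - m (override_on x y D) * m (override_on y x D) \<in> Q"
      by (simp add: m_def)
  qed
  finally show ?thesis by (simp add: D_def)
qed

lemma Lmarg_subset_prime_if_marg_notin:
  fixes Q :: "'k::comm_ring_1 mpoly set"
  assumes Q: "is_prime_ideal (Rring n a) Q" and IQ: "Imarg n a K \<subseteq> Q" and K: "finite K"
    and SK: "S \<subseteq> K" and TK: "T \<subseteq> K" and LQ: "Lmarg n a (S \<inter> T) \<subseteq> Q"
    and g: "g \<in> idx n a" and g_notin: "marg n a T g \<notin> Q"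
  shows "Lmarg n a S \<subseteq> Q"
proof -
  have ideal: "is_ideal (Rring n a) Q"
    using Q by (simp add: is_prime_ideal_def)
  have "marg n a S f \<in> Q" if f: "f \<in> idx n a" for f
  proof -
    let ?h = "override_on f g (T - S)"
    have "marg n a (S \<inter> T) g \<in> Q"
      using LQ g by (simp add: Lmarg_subset_iff[OF ideal])
    then have "marg n a (S \<union> T) ?h * marg n a (S \<inter> T) g \<in> Q"
      using ideal marg_in_Rring unfolding is_ideal_def by blast
    moreover have "marg n a S f * marg n a T g - marg n a (S \<union> T) ?h * marg n a (S \<inter> T) g \<in> Q"
      by (rule marg_lattice_relation_mem[OF ideal IQ K SK TK f])
    ultimately have "marg n a S f * marg n a T g \<in> Q"
      using ideal unfolding is_ideal_def by (metis diff_add_cancel)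
    with Q g_notin show ?thesis
      using marg_in_Rring unfolding is_prime_ideal_def by blast
  qed
  then show ?thesis
    by (simp add: Lmarg_subset_iff[OF ideal])
qed

lemma Lmarg_delete_or_insert_subset_prime:
  fixes Q :: "'k::comm_ring_1 mpoly set"
  assumes Q: "is_prime_ideal (Rring n a) Q" and IQ: "Imarg n a K \<subseteq> Q" and K: "finite K"
    and jK: "insert j L \<subseteq> K" and jL: "j \<notin> L" and LQ: "Lmarg n a L \<subseteq> Q"
  shows "Lmarg n a (K - {j}) \<subseteq> Q \<or> Lmarg n a (insert j L) \<subseteq> Q"
proof (rule disjCI)
  have ideal: "is_ideal (Rring n a) Q"
    using Q by (simp add: is_prime_ideal_def)
  assume "\<not> Lmarg n a (insert j L) \<subseteq> Q"
  then obtain g where "g \<in> idx n a" "marg n a (insert j L) g \<notin> Q"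
    by (auto simp: Lmarg_subset_iff[OF ideal])
  moreover have "(K - {j}) \<inter> insert j L = L"
    using jK jL by blast
  ultimately show "Lmarg n a (K - {j}) \<subseteq> Q"
    using Lmarg_subset_prime_if_marg_notin[OF Q IQ K Diff_subset jK] LQ by simp
qed

lemma exists_codim_one_Lmarg_subset_prime:
  fixes Q :: "'k::comm_ring_1 mpoly set"
  assumes Q: "is_prime_ideal (Rring n a) Q" and IQ: "Imarg n a K \<subseteq> Q" and K: "finite K"
  shows "L \<subset> K \<Longrightarrow> Lmarg n a L \<subseteq> Q \<Longrightarrow>
    \<exists>K'. L \<subseteq> K' \<and> K' \<subseteq> K \<and> card K' + 1 = card K \<and> Lmarg n a K' \<subseteq> Q"
proof (induction "card (K - L)" arbitrary: L rule: less_induct)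
  case less
  obtain j where j: "j \<in> K" "j \<notin> L"
    using less.prems(1) by blast
  have card_K: "card (K - {j}) + 1 = card K"
    using card_Suc_Diff1[OF K j(1)] by simp
  have "Lmarg n a (K - {j}) \<subseteq> Q \<or> Lmarg n a (insert j L) \<subseteq> Q"
    using Lmarg_delete_or_insert_subset_prime[OF Q IQ K _ j(2) less.prems(2)] j less.prems(1)
    by blast
  then show ?case
  proof
    assume "Lmarg n a (K - {j}) \<subseteq> Q"
    then show ?thesis
      using j less.prems(1) card_K by (intro exI[of _ "K - {j}"]) auto
  next
    assume extend: "Lmarg n a (insert j L) \<subseteq> Q"
    show ?thesis
    proof (cases "insert j L = K")
      case True
      then show ?thesis
        using j(2) card_K less.prems(2) by (intro exI[of _ L]) auto
    next
      case False
      then have "insert j L \<subset> K"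
        using j(1) less.prems(1) by blast
      moreover have "card (K - insert j L) < card (K - L)"
        using j K by (intro psubset_card_mono) auto
      ultimately show ?thesis
        using extend less.hyps
        by (meson subset_insertI order_trans)
    qed
  qed
qed

theorem corollary6p2:
  fixes n :: nat and a :: "nat \<Rightarrow> nat" and \<L> \<K> :: "nat set"
    and Q :: "'k::field mpoly set"
  assumes "\<L> \<subset> \<K>" and "\<K> \<subseteq> {1..n}"
    and "is_prime_ideal (Rring n a) Q"
    and "Lmarg n a \<L> \<subseteq> Q" and "Imarg n a \<K> \<subseteq> Q"
  shows "\<exists>\<K>'. \<L> \<subseteq> \<K>' \<and> \<K>' \<subseteq> \<K> \<and> card \<K>' + 1 = card \<K> \<and> Lmarg n a \<K>' \<subseteq> Q"
proof -
  have "finite \<K>"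
    using assms(2) by (rule finite_subset) simp
  with assms show ?thesis
    by (intro exists_codim_one_Lmarg_subset_prime)
qed

end
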